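(* Let $n\geq 2$ and let $\mathcal{G}=(\mathcal{V},\mathcal{E})$ be a directed graph on $\mathcal{V}=\{1,\ldots,n\}$ in which every node has at least one outgoing edge, with hyperlink matrix $A$, let $m\in(0,1)$, and let $x^*$ be the PageRank vector. Let $\{\phi(k)\}_{k\geq 0}$ be a sequence of subsets $\phi(k)\subset\mathcal{V}$ such that every $i\in\mathcal{V}$ belongs to $\phi(k)$ for infinitely many $k$. Consider the algorithm with initial states $x_i(0)=z_i(0)=m/n$ for all $i$, and for $k\geq 0$ and each $i\in\mathcal{V}$, $$x_i(k+1)=x_i(k)+\sum_{j\in\mathcal{L}_i^{\text{in}}\cap\phi(k)}\frac{1-m}{n_j}z_j(k),$$ $$z_i(k+1)=\begin{cases}\displaystyle\sum_{j\in\mathcal{L}_i^{\text{in}}\cap\phi(k)}\frac{1-m}{n_j}z_j(k)&\text{if } i\in\phi(k),\\ \displaystyle z_i(k)+\sum_{j\in\mathcal{L}_i^{\text{in}}\cap\phi(k)}\frac{1-m}{n_j}z_j(k)&\text{otherwise.}\end{cases}$$ Then $x(k)\to x^*$ as $k\to\infty$. If, in addition, there is $T>0$ such that each page belongs to at least one of $\phi(k),\phi(k+1),\ldots,\phi(k+T-1)$ for every $k\geq 0$, then the convergence is exponential, i.e., there exist $C>0$ and $\rho\in(0,1)$ with $\|x(k)-x^*\|\leq C\rho^k$ for all $k\geq 0$.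
   Context: Write $(i,j)\in\mathcal{E}$ if page $i$ has a link to page $j$. $\mathcal{L}_j^{\text{out}}=\{i:(j,i)\in\mathcal{E}\}$, $\mathcal{L}_i^{\text{in}}=\{j:(j,i)\in\mathcal{E}\}$, and $n_j=|\mathcal{L}_j^{\text{out}}|\geq 1$. The hyperlink matrix $A=(a_{ij})$ is defined by $a_{ij}=1/n_j$ if $i\in\mathcal{L}_j^{\text{out}}$ and $a_{ij}=0$ otherwise (column stochastic). The PageRank vector $x^*$ satisfies $x^*=(1-m)Ax^*+\frac{m}{n}\mathbf{1}_n$ and $\mathbf{1}_n^Tx^*=1$. Here $x(k)=(x_1(k),\ldots,x_n(k))^T$. *)

theory Defs
  imports "HOL-Analysis.Analysis"
begin

text \<open>Nodes are 1..n; the edge set E contains (i,j) when page i links to page j.\<close>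

definition out_links :: "(nat \<times> nat) set \<Rightarrow> nat \<Rightarrow> nat set" where
  "out_links E j = {i. (j, i) \<in> E}"

definition in_links :: "(nat \<times> nat) set \<Rightarrow> nat \<Rightarrow> nat set" where
  "in_links E i = {j. (j, i) \<in> E}"

definition outdeg :: "(nat \<times> nat) set \<Rightarrow> nat \<Rightarrow> nat" where
  "outdeg E j = card (out_links E j)"

definition hyperlink :: "(nat \<times> nat) set \<Rightarrow> nat \<Rightarrow> nat \<Rightarrow> real" where
  "hyperlink E i j = (if i \<in> out_links E j then 1 / real (outdeg E j) else 0)"

definition is_pagerank :: "nat \<Rightarrow> (nat \<times> nat) set \<Rightarrow> real \<Rightarrow> (nat \<Rightarrow> real) \<Rightarrow> bool" where
  "is_pagerank n E m xs \<longleftrightarrow>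
     (\<forall>i\<in>{1..n}. xs i = (1 - m) * (\<Sum>j\<in>{1..n}. hyperlink E i j * xs j) + m / real n) \<and>
     (\<Sum>i\<in>{1..n}. xs i) = 1"

primrec pr_xz :: "nat \<Rightarrow> (nat \<times> nat) set \<Rightarrow> real \<Rightarrow> (nat \<Rightarrow> nat set) \<Rightarrow> nat
                    \<Rightarrow> (nat \<Rightarrow> real) \<times> (nat \<Rightarrow> real)" where
  "pr_xz n E m phi 0 = ((\<lambda>i. m / real n), (\<lambda>i. m / real n))"
| "pr_xz n E m phi (Suc k) =
     (let x = fst (pr_xz n E m phi k); z = snd (pr_xz n E m phi k);
          f = (\<lambda>i. \<Sum>j\<in>in_links E i \<inter> phi k. (1 - m) / real (outdeg E j) * z j)
      in ((\<lambda>i. x i + f i), (\<lambda>i. if i \<in> phi k then f i else z i + f i)))"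

definition pr_x :: "nat \<Rightarrow> (nat \<times> nat) set \<Rightarrow> real \<Rightarrow> (nat \<Rightarrow> nat set) \<Rightarrow> nat \<Rightarrow> nat \<Rightarrow> real" where
  "pr_x n E m phi k = fst (pr_xz n E m phi k)"

definition vnorm :: "nat \<Rightarrow> (nat \<Rightarrow> real) \<Rightarrow> real" where
  "vnorm n v = L2_set v {1..n}"

end

theory Submission
  imports Defs
begin

text \<open>
  The vector z(k) is the residual mass not yet distributed: a page that is active
  hands its whole residual on, the fraction 1 - m of it split evenly among its
  out-neighbours.  This keeps the invariant x(k) = (1 - m) A (x(k) - z(k)) + (m/n) 1,
  and subtracting the PageRank equation bounds m times the 1-norm of x(k) - x* by
  1 - m times the total residual.  Every step removes the fraction m of what is sent,
  and the residual of a page can only grow until the page is next active; hence over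
  every window in which each page is active at least once the total residual shrinks
  by the factor 1 - m.
\<close>

lemma sum_column_stochastic:
  fixes a :: "'i \<Rightarrow> 'i \<Rightarrow> real"
  assumes "\<And>j. j \<in> I \<Longrightarrow> (\<Sum>i\<in>I. a i j) = 1"
  shows "(\<Sum>i\<in>I. \<Sum>j\<in>I. a i j * v j) = (\<Sum>j\<in>I. v j)"
  by (subst sum.swap) (simp add: sum_distrib_right[symmetric] assms)

lemma damped_equation_sum_abs_le:
  fixes a :: "'i \<Rightarrow> 'i \<Rightarrow> real"
  assumes "0 \<le> c"
    and a_nonneg: "\<And>i j. i \<in> I \<Longrightarrow> j \<in> I \<Longrightarrow> 0 \<le> a i j"
    and a_col: "\<And>j. j \<in> I \<Longrightarrow> (\<Sum>i\<in>I. a i j) = 1"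
    and z_nonneg: "\<And>j. j \<in> I \<Longrightarrow> 0 \<le> z j"
    and e_eq: "\<And>i. i \<in> I \<Longrightarrow> e i = c * (\<Sum>j\<in>I. a i j * (e j - z j))"
  shows "(1 - c) * (\<Sum>i\<in>I. \<bar>e i\<bar>) \<le> c * (\<Sum>i\<in>I. z i)"
proof -
  have "\<bar>e i\<bar> \<le> c * (\<Sum>j\<in>I. a i j * (\<bar>e j\<bar> + z j))" if "i \<in> I" for i
  proof -
    have "\<bar>e i\<bar> = c * \<bar>\<Sum>j\<in>I. a i j * (e j - z j)\<bar>"
      using e_eq[OF that] \<open>0 \<le> c\<close> by (simp add: abs_mult)
    also have "\<dots> \<le> c * (\<Sum>j\<in>I. \<bar>a i j * (e j - z j)\<bar>)"
      using \<open>0 \<le> c\<close> by (intro mult_left_mono sum_abs)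
    also have "\<dots> \<le> c * (\<Sum>j\<in>I. a i j * (\<bar>e j\<bar> + z j))"
    proof (intro mult_left_mono sum_mono)
      fix j assume "j \<in> I"
      have "\<bar>e j - z j\<bar> \<le> \<bar>e j\<bar> + z j"
        using z_nonneg[OF \<open>j \<in> I\<close>] by arith
      then show "\<bar>a i j * (e j - z j)\<bar> \<le> a i j * (\<bar>e j\<bar> + z j)"
        using a_nonneg[OF that \<open>j \<in> I\<close>] by (simp add: abs_mult mult_left_mono)
    qed (rule \<open>0 \<le> c\<close>)
    finally show ?thesis .
  qed
  then have "(\<Sum>i\<in>I. \<bar>e i\<bar>) \<le> c * (\<Sum>i\<in>I. \<Sum>j\<in>I. a i j * (\<bar>e j\<bar> + z j))"
    by (simp add: sum_distrib_left sum_mono)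
  also have "\<dots> = c * (\<Sum>j\<in>I. \<bar>e j\<bar> + z j)"
    by (simp add: sum_column_stochastic a_col)
  also have "\<dots> = c * (\<Sum>i\<in>I. \<bar>e i\<bar>) + c * (\<Sum>i\<in>I. z i)"
    by (simp add: sum.distrib distrib_left)
  finally show ?thesis by (simp add: algebra_simps)
qed

lemma decseq_tendsto_zero_if_contracting:
  fixes S :: "nat \<Rightarrow> real"
  assumes "decseq S" and S_nonneg: "\<And>k. 0 \<le> S k" and "c < 1"
    and contract: "\<And>k. \<exists>K\<ge>k. S K \<le> c * S k"
  shows "S \<longlonglongrightarrow> 0"
proof -
  obtain L where L: "S \<longlonglongrightarrow> L" "\<forall>k. L \<le> S k"
    using decseq_convergent[OF \<open>decseq S\<close>] S_nonneg by blast
  have "L \<le> c * S k" for k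
    using contract[of k] L(2) by (meson order.trans)
  then have "L \<le> c * L"
    by (intro LIMSEQ_le_const[OF tendsto_mult_left[OF L(1)]]) auto
  moreover have "0 \<le> L"
    using L(1) S_nonneg by (intro LIMSEQ_le_const) auto
  moreover have "L \<le> 0"
  proof -
    from \<open>L \<le> c * L\<close> have "(1 - c) * L \<le> 0"
      by (simp add: algebra_simps)
    with \<open>c < 1\<close> show ?thesis
      by (simp add: mult_le_0_iff)
  qed
  ultimately show ?thesis
    using L(1) by simp
qed

lemma decseq_exponential_bound_if_periodic_contraction:
  fixes S :: "nat \<Rightarrow> real"
  assumes "decseq S" "0 \<le> S 0" "0 < c" "c < 1" "0 < T"
    and contract: "\<And>k. S (k + T) \<le> c * S k"
  shows "S k \<le> S 0 / c * root T c ^ k"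
proof -
  define \<rho> where "\<rho> = root T c"
  have "0 < \<rho>" "\<rho> < 1" "\<rho> ^ T = c"
    using assms by (simp_all add: \<rho>_def real_root_gt_zero)
  have multiple: "S (q * T) \<le> c ^ q * S 0" for q
  proof (induction q)
    case (Suc q)
    have "S (Suc q * T) \<le> c * S (q * T)"
      using contract[of "q * T"] by (simp add: add.commute)
    also have "\<dots> \<le> c * (c ^ q * S 0)"
      using Suc \<open>0 < c\<close> by simp
    finally show ?case by simp
  qed simp
  define q where "q = k div T"
  have "k = T * q + k mod T" "k mod T < T"
    using \<open>0 < T\<close> by (simp_all add: q_def)
  then have "k \<le> T * (q + 1)"
    by (simp only: distrib_left mult_1_right)
  have "S k \<le> S (q * T)"
    using \<open>decseq S\<close> by (simp add: decseqD q_def)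
  also have "\<dots> \<le> c ^ (q + 1) * S 0 / c"
    using multiple[of q] \<open>0 < c\<close> by simp
  also have "c ^ (q + 1) = \<rho> ^ (T * (q + 1))"
    by (simp only: power_mult \<open>\<rho> ^ T = c\<close>)
  also have "\<rho> ^ (T * (q + 1)) * S 0 / c \<le> \<rho> ^ k * S 0 / c"
    using \<open>k \<le> T * (q + 1)\<close> \<open>0 < \<rho>\<close> \<open>\<rho> < 1\<close> \<open>0 \<le> S 0\<close> \<open>0 < c\<close>
    by (intro divide_right_mono mult_right_mono power_decreasing) auto
  finally show ?thesis by (simp add: \<rho>_def mult_ac)
qed

lemma sum_hyperlink_column:
  assumes "out_links E j \<subseteq> {1..n}" "outdeg E j \<ge> 1"
  shows "(\<Sum>i\<in>{1..n}. hyperlink E i j) = 1"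
proof -
  have "{1..n} \<inter> out_links E j = out_links E j"
    using assms(1) by blast
  have "(\<Sum>i\<in>{1..n}. hyperlink E i j) = (\<Sum>i\<in>{1..n} \<inter> out_links E j. 1 / real (outdeg E j))"
    unfolding hyperlink_def by (rule sum.inter_restrict[symmetric]) simp
  also have "\<dots> = (\<Sum>i\<in>out_links E j. 1 / real (outdeg E j))"
    by (simp only: \<open>{1..n} \<inter> out_links E j = out_links E j\<close>)
  also have "\<dots> = real (outdeg E j) * (1 / real (outdeg E j))"
    by (simp add: outdeg_def)
  also have "\<dots> = 1"
    using assms(2) by simp
  finally show ?thesis .
qed

locale async_pagerank =
  fixes n :: nat and E :: "(nat \<times> nat) set" and m :: real and phi :: "nat \<Rightarrow> nat set"
  assumes E_nodes: "E \<subseteq> {1..n} \<times> {1..n}"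
    and out_pos: "\<forall>j\<in>{1..n}. outdeg E j \<ge> 1"
    and m_pos: "0 < m" and m_less_1: "m < 1"
begin

abbreviation x :: "nat \<Rightarrow> nat \<Rightarrow> real" where
  "x k \<equiv> pr_x n E m phi k"

definition z :: "nat \<Rightarrow> nat \<Rightarrow> real" where
  "z k = snd (pr_xz n E m phi k)"

definition sent :: "nat \<Rightarrow> nat \<Rightarrow> real" where
  "sent k i = (if i \<in> phi k then z k i else 0)"

definition received :: "nat \<Rightarrow> nat \<Rightarrow> real" where
  "received k i = (1 - m) * (\<Sum>j\<in>{1..n}. hyperlink E i j * sent k j)"

definition mass :: "nat \<Rightarrow> real" where
  "mass k = (\<Sum>i\<in>{1..n}. z k i)"

lemma sum_in_links_eq_received:
  "(\<Sum>j\<in>in_links E i \<inter> phi k. (1 - m) / real (outdeg E j) * z k j) = received k i"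
proof -
  have "in_links E i \<subseteq> {1..n}"
    using E_nodes by (auto simp: in_links_def)
  have "(\<Sum>j\<in>{1..n}. hyperlink E i j * sent k j)
      = (\<Sum>j\<in>{1..n}. if j \<in> in_links E i \<inter> phi k then z k j / real (outdeg E j) else 0)"
    by (intro sum.cong) (auto simp: hyperlink_def sent_def in_links_def out_links_def)
  also have "\<dots> = (\<Sum>j\<in>{1..n} \<inter> (in_links E i \<inter> phi k). z k j / real (outdeg E j))"
    by (rule sum.inter_restrict[symmetric]) simp
  also have "{1..n} \<inter> (in_links E i \<inter> phi k) = in_links E i \<inter> phi k"
    using \<open>in_links E i \<subseteq> {1..n}\<close> by blast
  finally have "(\<Sum>j\<in>{1..n}. hyperlink E i j * sent k j)
      = (\<Sum>j\<in>in_links E i \<inter> phi k. z k j / real (outdeg E j))" .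
  then show ?thesis
    by (simp add: received_def sum_distrib_left)
qed

lemma x_0: "x 0 i = m / n"
  and z_0: "z 0 i = m / n"
  by (simp_all add: pr_x_def z_def)

lemma x_Suc: "x (Suc k) i = x k i + received k i"
  by (simp add: pr_x_def z_def Let_def sum_in_links_eq_received[symmetric])

lemma z_Suc: "z (Suc k) i = z k i - sent k i + received k i"
  by (simp add: pr_x_def z_def sent_def Let_def sum_in_links_eq_received[symmetric])

lemma hyperlink_column_stochastic: "j \<in> {1..n} \<Longrightarrow> (\<Sum>i\<in>{1..n}. hyperlink E i j) = 1"
  using E_nodes out_pos by (intro sum_hyperlink_column) (auto simp: out_links_def)

lemma z_nonneg: "0 \<le> z k i"
proof (induction k arbitrary: i)
  case 0
  show ?case using m_pos by (simp add: z_0)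
next
  case (Suc k)
  have "0 \<le> received k i"
    unfolding received_def sent_def using Suc m_less_1
    by (intro mult_nonneg_nonneg sum_nonneg) (auto simp: hyperlink_def)
  with Suc show ?case
    by (simp add: z_Suc sent_def)
qed

lemma sent_nonneg: "0 \<le> sent k i"
  by (simp add: sent_def z_nonneg)

lemma received_nonneg: "0 \<le> received k i"
  unfolding received_def using m_less_1
  by (intro mult_nonneg_nonneg sum_nonneg) (auto simp: hyperlink_def sent_nonneg)

lemma mass_0: "mass 0 \<le> m"
proof -
  have "mass 0 = real n * (m / real n)"
    by (simp add: mass_def z_0)
  then show ?thesis
    using m_pos by (cases "n = 0") simp_all
qed

lemma mass_Suc: "mass (Suc k) = mass k - m * (\<Sum>i\<in>{1..n}. sent k i)"
proof -
  have "(\<Sum>i\<in>{1..n}. received k i) = (1 - m) * (\<Sum>i\<in>{1..n}. sent k i)"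
    unfolding received_def sum_distrib_left[symmetric]
    using sum_column_stochastic[of "{1..n}" "hyperlink E", OF hyperlink_column_stochastic]
    by simp
  then show ?thesis
    by (simp add: mass_def z_Suc sum.distrib sum_subtractf algebra_simps)
qed

lemma mass_decseq: "decseq mass"
  using m_pos by (intro decseq_SucI) (simp add: mass_Suc sum_nonneg sent_nonneg)

lemma mass_nonneg: "0 \<le> mass k"
  by (simp add: mass_def sum_nonneg z_nonneg)

lemma mass_add:
  "mass (k + d) = mass k - m * (\<Sum>t\<in>{k..<k + d}. \<Sum>i\<in>{1..n}. sent t i)"
  by (induction d) (simp_all add: mass_Suc algebra_simps)

lemma z_le_sum_sent:
  assumes "t \<in> {k..<K}" "i \<in> phi t"
  shows "z k i \<le> (\<Sum>s\<in>{k..<K}. sent s i)"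
proof -
  from assms(1) have "k \<le> t" by simp
  then show ?thesis
  proof (induction k rule: inc_induct)
    case base
    show ?case
      using assms by (intro order.trans[OF _ member_le_sum[of t]]) (auto simp: sent_def z_nonneg)
  next
    case (step k)
    show ?case
    proof (cases "i \<in> phi k")
      case True
      then show ?thesis
        using step assms(1)
        by (intro order.trans[OF _ member_le_sum[of k]]) (auto simp: sent_def z_nonneg)
    next
      case False
      then have "z k i \<le> z (Suc k) i"
        by (simp add: z_Suc sent_def received_nonneg)
      also have "\<dots> \<le> (\<Sum>s\<in>{Suc k..<K}. sent s i)"
        using step by simp
      also have "\<dots> = (\<Sum>s\<in>{k..<K}. sent s i)"
        using False step assms(1) by (simp add: sum.atLeast_Suc_lessThan sent_def)
      finally show ?thesis .
    qed
  qed
qed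

lemma mass_contracts:
  assumes "k \<le> K" and covered: "\<forall>i\<in>{1..n}. \<exists>t\<in>{k..<K}. i \<in> phi t"
  shows "mass K \<le> (1 - m) * mass k"
proof -
  have "mass k \<le> (\<Sum>i\<in>{1..n}. \<Sum>t\<in>{k..<K}. sent t i)"
    unfolding mass_def using covered by (intro sum_mono) (auto intro: z_le_sum_sent)
  also have "\<dots> = (\<Sum>t\<in>{k..<K}. \<Sum>i\<in>{1..n}. sent t i)"
    by (rule sum.swap)
  finally have "m * mass k \<le> m * (\<Sum>t\<in>{k..<K}. \<Sum>i\<in>{1..n}. sent t i)"
    using m_pos by simp
  moreover have "mass K = mass k - m * (\<Sum>t\<in>{k..<K}. \<Sum>i\<in>{1..n}. sent t i)"
    using mass_add[of k "K - k"] \<open>k \<le> K\<close> by simp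
  ultimately show ?thesis
    by (simp add: algebra_simps)
qed

lemma mass_tendsto_zero:
  assumes "\<forall>i\<in>{1..n}. infinite {k. i \<in> phi k}"
  shows "mass \<longlonglongrightarrow> 0"
proof (rule decseq_tendsto_zero_if_contracting[OF mass_decseq mass_nonneg])
  show "1 - m < 1"
    using m_pos by simp
  fix k
  have "\<forall>i\<in>{1..n}. \<exists>t\<ge>k. i \<in> phi t"
    using assms by (auto simp: infinite_nat_iff_unbounded_le)
  then obtain g where g: "\<And>i. i \<in> {1..n} \<Longrightarrow> k \<le> g i \<and> i \<in> phi (g i)"
    by metis
  define K where "K = Suc (Max (insert k (g ` {1..n})))"
  have "g i < K" if "i \<in> {1..n}" for i
    unfolding K_def using that by (intro le_imp_less_Suc Max_ge) auto
  then have "\<forall>i\<in>{1..n}. \<exists>t\<in>{k..<K}. i \<in> phi t"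
    using g by fastforce
  moreover have "k \<le> K"
    by (simp add: K_def le_SucI)
  ultimately show "\<exists>K\<ge>k. mass K \<le> (1 - m) * mass k"
    using mass_contracts by blast
qed

lemma mass_exponential_bound:
  assumes "0 < T" and covered: "\<forall>k. \<forall>i\<in>{1..n}. \<exists>l\<in>{k..<k + T}. i \<in> phi l"
  shows "mass k \<le> m / (1 - m) * root T (1 - m) ^ k"
proof -
  have "mass k \<le> mass 0 / (1 - m) * root T (1 - m) ^ k"
    using m_pos m_less_1 \<open>0 < T\<close> covered mass_contracts
    by (intro decseq_exponential_bound_if_periodic_contraction[OF mass_decseq mass_nonneg]) auto
  also have "\<dots> \<le> m / (1 - m) * root T (1 - m) ^ k"
    using mass_0 m_less_1 \<open>0 < T\<close>
    by (intro mult_right_mono divide_right_mono) simp_all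
  finally show ?thesis .
qed

lemma x_eq_damped_residual:
  "i \<in> {1..n} \<Longrightarrow> x k i = (1 - m) * (\<Sum>j\<in>{1..n}. hyperlink E i j * (x k j - z k j)) + m / n"
proof (induction k)
  case (Suc k)
  have "(\<Sum>j\<in>{1..n}. hyperlink E i j * (x (Suc k) j - z (Suc k) j))
      = (\<Sum>j\<in>{1..n}. hyperlink E i j * (x k j - z k j) + hyperlink E i j * sent k j)"
    by (intro sum.cong) (simp_all add: x_Suc z_Suc algebra_simps)
  also have "\<dots> = (\<Sum>j\<in>{1..n}. hyperlink E i j * (x k j - z k j))
      + (\<Sum>j\<in>{1..n}. hyperlink E i j * sent k j)"
    by (rule sum.distrib)
  finally show ?case
    using Suc
    by (simp add: x_Suc received_def algebra_simps)
qed (simp add: x_0 z_0)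

lemma error_le_mass:
  assumes "is_pagerank n E m xs"
  shows "vnorm n (\<lambda>i. x k i - xs i) \<le> (1 - m) / m * mass k"
proof -
  define e where "e i = x k i - xs i" for i
  have e_eq: "e i = (1 - m) * (\<Sum>j\<in>{1..n}. hyperlink E i j * (e j - z k j))" if "i \<in> {1..n}" for i
  proof -
    have "(\<Sum>j\<in>{1..n}. hyperlink E i j * (e j - z k j))
        = (\<Sum>j\<in>{1..n}. hyperlink E i j * (x k j - z k j) - hyperlink E i j * xs j)"
      by (intro sum.cong) (simp_all add: e_def algebra_simps)
    also have "\<dots> = (\<Sum>j\<in>{1..n}. hyperlink E i j * (x k j - z k j))
        - (\<Sum>j\<in>{1..n}. hyperlink E i j * xs j)"
      by (rule sum_subtractf)
    finally show ?thesis
      using x_eq_damped_residual[OF that, of k] assms that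
      by (simp add: is_pagerank_def e_def right_diff_distrib)
  qed
  have "(1 - (1 - m)) * (\<Sum>i\<in>{1..n}. \<bar>e i\<bar>) \<le> (1 - m) * (\<Sum>i\<in>{1..n}. z k i)"
    using m_less_1
    by (intro damped_equation_sum_abs_le[OF _ _ hyperlink_column_stochastic z_nonneg e_eq])
      (simp_all add: hyperlink_def)
  then have "m * (\<Sum>i\<in>{1..n}. \<bar>e i\<bar>) \<le> (1 - m) * mass k"
    by (simp add: mass_def)
  moreover have "vnorm n e \<le> (\<Sum>i\<in>{1..n}. \<bar>e i\<bar>)"
    by (simp add: vnorm_def L2_set_le_sum_abs)
  ultimately have "m * vnorm n e \<le> (1 - m) * mass k"
    using m_pos by (meson mult_left_mono order.trans less_imp_le)
  then show ?thesis
    using m_pos by (simp add: e_def[abs_def] field_simps)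
qed

lemma error_tendsto_zero:
  assumes "is_pagerank n E m xs" and "\<forall>i\<in>{1..n}. infinite {k. i \<in> phi k}"
  shows "(\<lambda>k. vnorm n (\<lambda>i. x k i - xs i)) \<longlonglongrightarrow> 0"
proof (rule Lim_null_comparison)
  show "\<forall>\<^sub>F k in sequentially. norm (vnorm n (\<lambda>i. x k i - xs i)) \<le> (1 - m) / m * mass k"
    using error_le_mass[OF assms(1)] by (simp add: vnorm_def)
  show "(\<lambda>k. (1 - m) / m * mass k) \<longlonglongrightarrow> 0"
    using mass_tendsto_zero[OF assms(2)] by (rule tendsto_mult_right_zero)
qed

lemma error_exponential_bound:
  assumes "is_pagerank n E m xs"
    and "0 < T" and "\<forall>k. \<forall>i\<in>{1..n}. \<exists>l\<in>{k..<k + T}. i \<in> phi l"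
  shows "vnorm n (\<lambda>i. x k i - xs i) \<le> root T (1 - m) ^ k"
proof -
  have "vnorm n (\<lambda>i. x k i - xs i) \<le> (1 - m) / m * mass k"
    using error_le_mass[OF assms(1)] .
  also have "\<dots> \<le> (1 - m) / m * (m / (1 - m) * root T (1 - m) ^ k)"
    using mass_exponential_bound[OF assms(2,3)] m_pos m_less_1 by (intro mult_left_mono) simp_all
  also have "\<dots> = root T (1 - m) ^ k"
    using m_pos m_less_1 by simp
  finally show ?thesis .
qed

end

theorem theorem2:
  fixes n :: nat and E :: "(nat \<times> nat) set" and m :: real
    and xs :: "nat \<Rightarrow> real" and phi :: "nat \<Rightarrow> nat set"
  assumes n2: "n \<ge> 2"
    and E_nodes: "E \<subseteq> {1..n} \<times> {1..n}"
    and out_pos: "\<forall>j\<in>{1..n}. outdeg E j \<ge> 1"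
    and m: "0 < m" "m < 1"
    and pr: "is_pagerank n E m xs"
    and phi_sub: "\<forall>k. phi k \<subseteq> {1..n}"
    and phi_inf: "\<forall>i\<in>{1..n}. infinite {k. i \<in> phi k}"
  shows "(\<lambda>k. vnorm n (\<lambda>i. pr_x n E m phi k i - xs i)) \<longlonglongrightarrow> 0
         \<and> (\<forall>T::nat. T > 0 \<longrightarrow>
              (\<forall>k. \<forall>i\<in>{1..n}. \<exists>l\<in>{k..<k+T}. i \<in> phi l) \<longrightarrow>
              (\<exists>C>0. \<exists>\<rho>. 0 < \<rho> \<and> \<rho> < 1 \<and>
                 (\<forall>k. vnorm n (\<lambda>i. pr_x n E m phi k i - xs i) \<le> C * \<rho> ^ k)))"
proof -
  interpret async_pagerank n E m phi
    using E_nodes out_pos m by unfold_locales auto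
  have "\<exists>C>0. \<exists>\<rho>. 0 < \<rho> \<and> \<rho> < 1 \<and>
      (\<forall>k. vnorm n (\<lambda>i. pr_x n E m phi k i - xs i) \<le> C * \<rho> ^ k)"
    if "0 < T" and "\<forall>k. \<forall>i\<in>{1..n}. \<exists>l\<in>{k..<k+T}. i \<in> phi l" for T
  proof -
    have "0 < root T (1 - m)" "root T (1 - m) < 1"
      using \<open>0 < T\<close> m by (simp_all add: real_root_gt_zero)
    moreover have "\<forall>k. vnorm n (\<lambda>i. pr_x n E m phi k i - xs i) \<le> 1 * root T (1 - m) ^ k"
      using error_exponential_bound[OF pr that] by simp
    ultimately show ?thesis
      using zero_less_one by blast
  qed
  then show ?thesis
    using error_tendsto_zero[OF pr phi_inf] by blast
qed

end
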